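(* Assume the general-case standing hypotheses, let $\sigma\in(0,1)$, $C_1>0$, $\gamma\in[0,2)$, $C_8>0$. Then there exist $\rho>0$ and $\bar\mu\in(0,\hat\mu]$ such that for all $\mu\in(0,\bar\mu]$ and all $(x,\lambda)\in\mathcal B((x^*,\lambda^* ),\delta)$ with $l<x<u$, $\lambda^l,\lambda^u>0$, $\|(x,\lambda)-(x^\mu,\lambda^\mu)\|<\rho$, $\|F_\mu(x,\lambda)\|\le C_1\mu$ and $\|(\Delta x^N_{\mathcal A_x},\Delta\lambda^{l,N}_{\mathcal I_l},\Delta\lambda^{u,N}_{\mathcal I_u})\|\ge C_8\mu^\gamma$ (Newton direction for $\mu^+=\sigma\mu$), the following holds. Define $(\Delta x,\Delta\lambda^l,\Delta\lambda^u)$ by: $\Delta x_i\in\{\Delta x_i^S,\Delta x_i^C\}$ for $i\in\mathcal A_x$ and $\Delta x_i=0$ for $i\in\mathcal I_x$; $\Delta\lambda^l_i=\Delta\lambda^{l,C}_i$ for $i\in\mathcal I_l$ and $0$ for $i\in\mathcal A_l$; $\Delta\lambda^u_i=\Delta\lambda^{u,C}_i$ for $i\in\mathcal I_u$ and $0$ for $i\in\mathcal A_u$. Then with $(x_+^N,\lambda_+^N)=(x,\lambda)+(\Delta x^N,\Delta\lambda^N)$ and $(x_+,\lambda_+)=(x,\lambda)+(\Delta x,\Delta\lambda)$, $$\|(x_+^N,\lambda_+^N)-(x_+,\lambda_+)\|\le\|(x_+^N,\lambda_+^N)-(x,\lambda)\|.$$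
   Context: General problem: minimize $f(x)$ subject to $l\le x\le u$, $l,u\in\mathbb R^n$, $l<u$, $f$ twice continuously differentiable with locally Lipschitz Hessian; multipliers $\lambda=(\lambda^l,\lambda^u)$. $F_\mu(x,\lambda)=\begin{bmatrix}\nabla f(x)-\lambda^l+\lambda^u\\ \Lambda^l(X-L)e-\mu e\\ \Lambda^u(U-X)e-\mu e\end{bmatrix}$ with $X,L,U,\Lambda^l,\Lambda^u$ the diagonal matrices of $x,l,u,\lambda^l,\lambda^u$; $F'(x,\lambda)=\begin{bmatrix}\nabla^2f(x)&-I&I\\ \Lambda^l&X-L&0\\ -\Lambda^u&0&U-X\end{bmatrix}$; Newton direction solves $F'(x,\lambda)(\Delta x^N,\Delta\lambda^{l,N},\Delta\lambda^{u,N})=-F_{\mu^+}(x,\lambda)$. Euclidean norms. Approximations: $\Delta x_i^S=-\frac1{d_i}\big([\nabla f(x)]_i-\mu^+[\frac1{x_i-l_i}-\frac1{u_i-x_i}]\big)$ with $d_i=[\nabla^2f(x)]_{ii}+\frac{\lambda^l_i}{x_i-l_i}+\frac{\lambda^u_i}{u_i-x_i}$; $\Delta x^C_i=-(x_i-l_i)+\mu^+/\lambda^l_i$ for $i\in\mathcal A_l$, $\Delta x_i^C=(u_i-x_i)-\mu^+/\lambda^u_i$ for $i\in\mathcal A_u$; $\Delta\lambda^{l,C}_i=-\lambda^l_i+\mu^+/(x_i-l_i)$, $\Delta\lambda^{u,C}_i=-\lambda^u_i+\mu^+/(u_i-x_i)$. Sets: $\mathcal A_l=\{i:x^*_i=l_i\}$,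 $\mathcal A_u=\{i:x^*_i=u_i\}$, $\mathcal I_l,\mathcal I_u$ complements, $\mathcal A_x=\mathcal A_l\cup\mathcal A_u$, $\mathcal I_x$ its complement. Standing hypotheses: $\nabla f(x^* )-\lambda^{l*}+\lambda^{u*}=0$, $l\le x^*\le u$, $\lambda^{l*},\lambda^{u*}\ge0$, $(x^*-l)_i\lambda^{l*}_i=0$, $(u-x^* )_i\lambda^{u*}_i=0$, $(x^*-l)+\lambda^{l*}>0$, $(u-x^* )+\lambda^{u*}>0$, $[\nabla^2f(x^* )]_{\mathcal I_x\mathcal I_x}\succ0$; $\delta>0$ with $F'$ nonsingular and boundedly invertible on $\mathcal B((x^*,\lambda^* ),\delta)$; $\hat\mu>0$ with a Lipschitz barrier trajectory $(x^\mu,\lambda^\mu)\in\mathcal B((x^*,\lambda^* ),\delta)$, $F_\mu(x^\mu,\lambda^\mu)=0$, $\|(x^\mu,\lambda^\mu)-(x^*,\lambda^* )\|\le C_4\mu$ for $\mu\in(0,\hat\mu]$. *)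

theory Defs
  imports "HOL-Analysis.Analysis"
begin

text \<open>Primal-dual states (x, lambda^l, lambda^u) live in the product type below; the
  library norm on products is norm (a,b) = sqrt (norm a ^ 2 + norm b ^ 2), so the norm of
  a triple is the Euclidean norm on R^(3n).\<close>

type_synonym 'n pdstate = "(real^'n) \<times> (real^'n) \<times> (real^'n)"

definition Fmu :: "(real^'n \<Rightarrow> real^'n) \<Rightarrow> real^'n \<Rightarrow> real^'n \<Rightarrow> real \<Rightarrow> 'n pdstate \<Rightarrow> 'n pdstate" where
  "Fmu g l u \<mu> s = (case s of (x, ll, lu) \<Rightarrow>
     (g x - ll + lu,
      (\<chi> i. ll$i * (x$i - l$i) - \<mu>),
      (\<chi> i. lu$i * (u$i - x$i) - \<mu>)))"

definition Fprime :: "(real^'n \<Rightarrow> real^'n^'n) \<Rightarrow> real^'n \<Rightarrow> real^'n \<Rightarrow> 'n pdstate \<Rightarrow> 'n pdstate \<Rightarrow> 'n pdstate" where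
  "Fprime H l u s d = (case s of (x, ll, lu) \<Rightarrow> case d of (dx, dl, du) \<Rightarrow>
     (H x *v dx - dl + du,
      (\<chi> i. ll$i * dx$i + (x$i - l$i) * dl$i),
      (\<chi> i. - lu$i * dx$i + (u$i - x$i) * du$i)))"

definition dxS :: "(real^'n \<Rightarrow> real^'n) \<Rightarrow> (real^'n \<Rightarrow> real^'n^'n) \<Rightarrow> real^'n \<Rightarrow> real^'n \<Rightarrow> real \<Rightarrow> 'n pdstate \<Rightarrow> 'n \<Rightarrow> real" where
  "dxS g H l u mup s i = (case s of (x, ll, lu) \<Rightarrow>
     (let d = H x $ i $ i + ll$i / (x$i - l$i) + lu$i / (u$i - x$i)
      in - (1 / d) * (g x $ i - mup * (1 / (x$i - l$i) - 1 / (u$i - x$i)))))"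

definition dxCl :: "real^'n \<Rightarrow> real \<Rightarrow> 'n pdstate \<Rightarrow> 'n \<Rightarrow> real" where
  "dxCl l mup s i = (case s of (x, ll, lu) \<Rightarrow> - (x$i - l$i) + mup / ll$i)"

definition dxCu :: "real^'n \<Rightarrow> real \<Rightarrow> 'n pdstate \<Rightarrow> 'n \<Rightarrow> real" where
  "dxCu u mup s i = (case s of (x, ll, lu) \<Rightarrow> (u$i - x$i) - mup / lu$i)"

definition dlC :: "real^'n \<Rightarrow> real \<Rightarrow> 'n pdstate \<Rightarrow> 'n \<Rightarrow> real" where
  "dlC l mup s i = (case s of (x, ll, lu) \<Rightarrow> - ll$i + mup / (x$i - l$i))"

definition duC :: "real^'n \<Rightarrow> real \<Rightarrow> 'n pdstate \<Rightarrow> 'n \<Rightarrow> real" where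
  "duC u mup s i = (case s of (x, ll, lu) \<Rightarrow> - lu$i + mup / (u$i - x$i))"

end

theory Submission
  imports Defs
begin

text \<open>Let \<open>c\<close> be the smallest strict-complementarity margin at the solution. Near the central path
  the iterate is within \<open>c/2\<close> of the solution, so for an active bound the multiplier and for an
  inactive bound the slack stays above \<open>c/2\<close>, while all complementarity products are \<open>O(\<mu>)\<close>
  and, by the bounded inverse Jacobian, so is the Newton step. Solving one row of the Newton system
  for one unknown then shows that each approximate component differs from the corresponding Newton
  component by \<open>O(\<mu>\<^sup>2)\<close>; the approximate step vanishes elsewhere. Hence the approximate step is
  no farther from the Newton step than the origin is, as soon as the squared errors, of total size
  \<open>O(\<mu>\<^sup>4)\<close>, are dominated by the assumed mass \<open>(C8 \<mu>\<^sup>\<gamma>)\<^sup>2\<close> of the Newton step on those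
  components; this holds for small \<open>\<mu>\<close> because \<open>\<gamma> < 2\<close>.\<close>

lemma complementarity_step_error:
  fixes p q s t m K B c \<mu> :: real
  assumes "0 < p" "c / 2 \<le> q" "0 < c" "p * q \<le> K * \<mu>" "\<bar>s\<bar> \<le> B * \<mu>"
    and row: "p * s + q * t = m - p * q"
  shows "\<bar>t - (- p + m / q)\<bar> \<le> 4 * K * B * \<mu>^2 / c^2"
proof -
  have "0 < q" using assms by linarith
  have "q * t + p * q - m = - (p * s)" using row by linarith
  have "t - (- p + m / q) = (q * t + p * q - m) / q"
    using \<open>0 < q\<close> by (simp add: field_simps)
  also have "\<dots> = - (p * s / q)"
    unfolding \<open>q * t + p * q - m = - (p * s)\<close> by simp
  finally have "t - (- p + m / q) = - (p * s / q)" .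
  then have "\<bar>t - (- p + m / q)\<bar> = p * \<bar>s\<bar> / q"
    using \<open>0 < p\<close> \<open>0 < q\<close> by (simp add: abs_mult)
  also have "\<dots> \<le> (2 * (K * \<mu>) / c) * (B * \<mu>) / (c / 2)"
  proof (intro frac_le mult_mono)
    have "p * c \<le> p * (2 * q)" using assms by (intro mult_left_mono) auto
    also have "\<dots> \<le> 2 * (K * \<mu>)" using assms by simp
    finally show "p \<le> 2 * (K * \<mu>) / c" using assms by (simp add: field_simps mult.commute)
    have "0 < p * q" using \<open>0 < p\<close> \<open>0 < q\<close> by simp
    then have "0 \<le> K * \<mu>" using assms by linarith
    moreover have "0 \<le> B * \<mu>" using assms by (meson abs_ge_zero order_trans)
    ultimately show "0 \<le> 2 * (K * \<mu>) / c * (B * \<mu>)" "0 \<le> 2 * (K * \<mu>) / c"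
      using \<open>0 < c\<close> by simp_all
  qed (use assms \<open>0 < q\<close> in auto)
  also have "\<dots> = 4 * K * B * \<mu>^2 / c^2"
    using \<open>0 < c\<close> by (simp add: field_simps power2_eq_square)
  finally show ?thesis .
qed

text \<open>Eliminating \<open>dl\<close> and \<open>du\<close> with the complementarity rows leaves the diagonal \<open>d\<close> of the
  condensed system; the only discrepancy is the off-diagonal Hessian contribution \<open>r\<close>.\<close>

lemma diagonal_step_error:
  fixes a b ll lu h r dx dl du gi m d D R :: real
  assumes "0 < a" "0 < b" "d = h + ll / a + lu / b" "0 < D" "D \<le> d" "\<bar>r\<bar> \<le> R"
    and row1: "h * dx + r - dl + du = - (gi - ll + lu)"
    and row2: "ll * dx + a * dl = - (ll * a - m)"
    and row3: "- lu * dx + b * du = - (lu * b - m)"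
  shows "\<bar>dx - (- (1 / d) * (gi - m * (1 / a - 1 / b)))\<bar> \<le> R / D"
proof -
  have "0 < d" using assms by linarith
  have "ll / a * dx = m / a - ll - dl" using row2 \<open>0 < a\<close> by (simp add: field_simps)
  moreover have "lu / b * dx = du + lu - m / b" using row3 \<open>0 < b\<close> by (simp add: field_simps)
  ultimately have "d * dx = - (gi - m * (1 / a - 1 / b)) - r"
    using row1 \<open>d = _\<close> by (simp add: algebra_simps)
  moreover have "dx - (- (1 / d) * (gi - m * (1 / a - 1 / b)))
      = (d * dx + (gi - m * (1 / a - 1 / b))) / d"
    using \<open>0 < d\<close> by (simp add: field_simps)
  ultimately have "dx - (- (1 / d) * (gi - m * (1 / a - 1 / b))) = - r / d"
    by simp
  then have "\<bar>dx - (- (1 / d) * (gi - m * (1 / a - 1 / b)))\<bar> = \<bar>r\<bar> / d"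
    using \<open>0 < d\<close> by simp
  also have "\<dots> \<le> R / D"
    using assms \<open>0 < d\<close> by (intro frac_le) auto
  finally show ?thesis .
qed

lemma barrier_diagonal_lower_bound:
  fixes ll a lu b h M c K \<mu> :: real
  assumes "c / 2 \<le> ll" "0 < a" "ll * a \<le> K * \<mu>" "0 \<le> lu" "0 < b" "\<bar>h\<bar> \<le> M"
    "0 < c" "0 < \<mu>" "0 < K" "\<mu> \<le> c^2 / (8 * K * (M + 1))"
  shows "c^2 / (8 * K * \<mu>) \<le> h + ll / a + lu / b"
proof -
  have "c / 2 * a \<le> ll * a" using assms by (intro mult_right_mono) auto
  then have "c * a \<le> 2 * K * \<mu>" using assms by linarith
  then have "a \<le> 2 * K * \<mu> / c" using assms by (simp add: field_simps)
  then have "(c / 2) / (2 * K * \<mu> / c) \<le> ll / a"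
    using assms by (intro frac_le) auto
  moreover have "(c / 2) / (2 * K * \<mu> / c) = 2 * (c^2 / (8 * K * \<mu>))"
    using assms by (simp add: field_simps power2_eq_square)
  moreover have "M + 1 \<le> c^2 / (8 * K * \<mu>)"
  proof -
    have "0 \<le> M" using assms(6) by linarith
    then have "\<mu> * (8 * K * (M + 1)) \<le> c^2"
      using assms(9,10) pos_le_divide_eq[of "8 * K * (M + 1)"] by simp
    then have "(M + 1) * (8 * K * \<mu>) \<le> c^2" by (simp add: mult_ac)
    then show ?thesis using assms(8,9) pos_le_divide_eq[of "8 * K * \<mu>"] by simp
  qed
  moreover have "0 \<le> lu / b" using assms by simp
  ultimately show ?thesis using assms by linarith
qed

lemma offdiagonal_matrix_vector_bound:
  fixes A :: "real^'n^'n" and v :: "real^'n"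
  assumes "\<And>j. \<bar>A $ i $ j\<bar> \<le> M" "\<And>j. \<bar>v $ j\<bar> \<le> b"
  shows "\<bar>(A *v v) $ i - A $ i $ i * v $ i\<bar> \<le> real CARD('n) * M * b"
proof -
  have "(A *v v) $ i - A $ i $ i * v $ i = (\<Sum>j\<in>UNIV - {i}. A $ i $ j * v $ j)"
    by (simp add: matrix_vector_mult_def sum.remove[of UNIV i])
  then have "\<bar>(A *v v) $ i - A $ i $ i * v $ i\<bar> \<le> (\<Sum>j\<in>UNIV - {i}. \<bar>A $ i $ j * v $ j\<bar>)"
    by (simp add: sum_abs)
  also have "\<dots> \<le> (\<Sum>j\<in>UNIV. \<bar>A $ i $ j * v $ j\<bar>)"
    by (intro sum_mono2) auto
  also have "\<dots> \<le> (\<Sum>j\<in>(UNIV::'n set). M * b)"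
    unfolding abs_mult using assms by (intro sum_mono mult_mono) (auto intro: order_trans[OF abs_ge_zero])
  finally show ?thesis by simp
qed

lemma power4_le_square_powr:
  fixes \<mu> \<gamma> C A :: real
  assumes "0 < \<mu>" "\<gamma> < 2" "0 \<le> A" "\<mu> \<le> (C^2 / (A + 1)) powr (1 / (4 - 2 * \<gamma>))"
  shows "A * \<mu>^4 \<le> (C * \<mu> powr \<gamma>)^2"
proof -
  define P where "P = C^2 / (A + 1)"
  have "0 \<le> P" unfolding P_def using assms by simp
  have "\<mu> powr (4 - 2 * \<gamma>) \<le> (P powr (1 / (4 - 2 * \<gamma>))) powr (4 - 2 * \<gamma>)"
    using assms unfolding P_def by (intro powr_mono2) auto
  also have "\<dots> \<le> P" using \<open>0 \<le> P\<close> assms by (simp add: powr_powr)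
  finally have "\<mu> powr (4 - 2 * \<gamma>) \<le> P" .
  have "\<mu>^4 = \<mu> powr (2 * \<gamma>) * \<mu> powr (4 - 2 * \<gamma>)"
    using assms by (simp add: powr_add[symmetric])
  also have "\<dots> \<le> \<mu> powr (2 * \<gamma>) * P"
    using \<open>\<mu> powr (4 - 2 * \<gamma>) \<le> P\<close> by (intro mult_left_mono) auto
  finally have "A * \<mu>^4 \<le> A * (\<mu> powr (2 * \<gamma>) * P)"
    using assms by (intro mult_left_mono) auto
  also have "\<dots> \<le> (A + 1) * P * \<mu> powr (2 * \<gamma>)"
    using \<open>0 \<le> P\<close> by (simp add: algebra_simps)
  also have "\<dots> = (C * \<mu> powr \<gamma>)^2"
    using assms by (simp add: P_def power_mult_distrib powr_add[symmetric] power2_eq_square)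
  finally show ?thesis .
qed

lemma norm_pdstate_eq:
  fixes a b c :: "real^'n"
  shows "norm (a, b, c) = sqrt (\<Sum>i\<in>UNIV. (a $ i)\<^sup>2 + (b $ i)\<^sup>2 + (c $ i)\<^sup>2)"
proof -
  have "\<And>v :: real^'n. (norm v)\<^sup>2 = (\<Sum>i\<in>UNIV. (v $ i)\<^sup>2)"
    by (simp add: norm_vec_def L2_set_def sum_nonneg)
  then show ?thesis by (simp add: norm_Pair sum.distrib add.assoc sum_nonneg)
qed

lemma abs_nth_le_norm_pdstate:
  fixes a b c :: "real^'n"
  shows "\<bar>a $ i\<bar> \<le> norm (a, b, c)" "\<bar>b $ i\<bar> \<le> norm (a, b, c)" "\<bar>c $ i\<bar> \<le> norm (a, b, c)"
  using component_le_norm_cart[of a i] component_le_norm_cart[of b i] component_le_norm_cart[of c i]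
    norm_fst_le[of a "(b, c)"] norm_snd_le[of "(b, c)" a] norm_fst_le[of b c] norm_snd_le[of c b]
  by simp_all

text \<open>Outside the supports the difference is the first vector itself; on them the squared
  errors add up to at most \<open>3 n e\<^sup>2 \<le> t\<^sup>2\<close>, which the first vector's mass there dominates.\<close>

lemma norm_diff_le_norm_if_close_on_supports:
  fixes a b c a' b' c' :: "real^'n" and S T U :: "'n set" and e t :: real
  assumes supp: "\<And>i. i \<notin> S \<Longrightarrow> a' $ i = 0" "\<And>i. i \<notin> T \<Longrightarrow> b' $ i = 0" "\<And>i. i \<notin> U \<Longrightarrow> c' $ i = 0"
    and close: "\<And>i. i \<in> S \<Longrightarrow> \<bar>a $ i - a' $ i\<bar> \<le> e" "\<And>i. i \<in> T \<Longrightarrow> \<bar>b $ i - b' $ i\<bar> \<le> e"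
      "\<And>i. i \<in> U \<Longrightarrow> \<bar>c $ i - c' $ i\<bar> \<le> e"
    and small: "3 * real CARD('n) * e\<^sup>2 \<le> t\<^sup>2" "0 \<le> t"
    and large: "t \<le> sqrt ((\<Sum>i\<in>S. (a $ i)\<^sup>2) + (\<Sum>i\<in>T. (b $ i)\<^sup>2) + (\<Sum>i\<in>U. (c $ i)\<^sup>2))"
  shows "norm (a - a', b - b', c - c') \<le> norm (a, b, c)"
proof -
  define mass where "mass i = (if i \<in> S then (a $ i)\<^sup>2 else 0) + (if i \<in> T then (b $ i)\<^sup>2 else 0)
      + (if i \<in> U then (c $ i)\<^sup>2 else 0)" for i
  define err where "err i = (if i \<in> S then (a $ i - a' $ i)\<^sup>2 else 0)
      + (if i \<in> T then (b $ i - b' $ i)\<^sup>2 else 0) + (if i \<in> U then (c $ i - c' $ i)\<^sup>2 else 0)" for i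
  have split: "((a - a') $ i)\<^sup>2 + ((b - b') $ i)\<^sup>2 + ((c - c') $ i)\<^sup>2
      = (a $ i)\<^sup>2 + (b $ i)\<^sup>2 + (c $ i)\<^sup>2 - mass i + err i" for i
    using supp[of i] unfolding mass_def err_def by (cases "i \<in> S"; cases "i \<in> T"; cases "i \<in> U") simp_all
  have "(\<Sum>i\<in>UNIV. mass i) = (\<Sum>i\<in>S. (a $ i)\<^sup>2) + (\<Sum>i\<in>T. (b $ i)\<^sup>2) + (\<Sum>i\<in>U. (c $ i)\<^sup>2)"
    unfolding mass_def by (simp add: sum.distrib sum.If_cases)
  moreover have "t\<^sup>2 \<le> (\<Sum>i\<in>S. (a $ i)\<^sup>2) + (\<Sum>i\<in>T. (b $ i)\<^sup>2) + (\<Sum>i\<in>U. (c $ i)\<^sup>2)"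
    using power_mono[OF large \<open>0 \<le> t\<close>, of 2] by (simp add: sum_nonneg)
  moreover have "err i \<le> 3 * e\<^sup>2" for i
  proof -
    have "\<And>d. \<bar>d\<bar> \<le> e \<Longrightarrow> d\<^sup>2 \<le> e\<^sup>2" by (metis abs_le_square_iff abs_of_nonneg abs_ge_zero order_trans)
    then show ?thesis unfolding err_def using close[of i] by (smt (verit) zero_le_power2)
  qed
  then have "(\<Sum>i\<in>UNIV. err i) \<le> 3 * real CARD('n) * e\<^sup>2"
    using sum_bounded_above[of UNIV err "3 * e\<^sup>2"] by (simp add: mult_ac)
  ultimately have "(\<Sum>i\<in>UNIV. err i) \<le> (\<Sum>i\<in>UNIV. mass i)" using small by linarith
  then have "(\<Sum>i\<in>UNIV. ((a - a') $ i)\<^sup>2 + ((b - b') $ i)\<^sup>2 + ((c - c') $ i)\<^sup>2)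
      \<le> (\<Sum>i\<in>UNIV. (a $ i)\<^sup>2 + (b $ i)\<^sup>2 + (c $ i)\<^sup>2)"
    unfolding split by (simp add: sum.distrib sum_subtractf)
  then show ?thesis unfolding norm_pdstate_eq by (rule real_sqrt_le_mono)
qed

lemma newton_equation_rows:
  assumes "Fprime H l u (x, ll, lu) (dx, dl, du) = - Fmu g l u m (x, ll, lu)"
  shows "(H x *v dx) $ i - dl $ i + du $ i = - (g x $ i - ll $ i + lu $ i)"
    and "ll $ i * dx $ i + (x $ i - l $ i) * dl $ i = - (ll $ i * (x $ i - l $ i) - m)"
    and "- lu $ i * dx $ i + (u $ i - x $ i) * du $ i = - (lu $ i * (u $ i - x $ i) - m)"
  using assms unfolding Fprime_def Fmu_def by (simp_all add: vec_eq_iff)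

lemma complementarity_le_of_norm_Fmu:
  assumes "norm (Fmu g l u \<mu> (x, ll, lu)) \<le> C * \<mu>"
  shows "ll $ i * (x $ i - l $ i) \<le> (1 + C) * \<mu>" "lu $ i * (u $ i - x $ i) \<le> (1 + C) * \<mu>"
proof -
  let ?a = "g x - ll + lu" and ?b = "\<chi> i. ll $ i * (x $ i - l $ i) - \<mu>"
    and ?c = "\<chi> i. lu $ i * (u $ i - x $ i) - \<mu>"
  have "\<bar>?b $ i\<bar> \<le> C * \<mu>" "\<bar>?c $ i\<bar> \<le> C * \<mu>"
    using abs_nth_le_norm_pdstate[where a = ?a and b = ?b and c = ?c and i = i] assms
    unfolding Fmu_def by auto
  then show "ll $ i * (x $ i - l $ i) \<le> (1 + C) * \<mu>" "lu $ i * (u $ i - x $ i) \<le> (1 + C) * \<mu>"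
    by (auto simp: algebra_simps)
qed

lemma norm_Fmu_le_shift:
  fixes s :: "('n::finite) pdstate"
  assumes "0 \<le> \<sigma>" "\<sigma> \<le> 1" "0 \<le> \<mu>"
  shows "norm (Fmu g l u (\<sigma> * \<mu>) s) \<le> norm (Fmu g l u \<mu> s) + 2 * real CARD('n) * \<mu>"
proof -
  obtain x ll lu where s: "s = (x, ll, lu)" by (cases s) auto
  define v where "v = (\<chi> i. \<mu> - \<sigma> * \<mu> :: real^'n)"
  have "Fmu g l u (\<sigma> * \<mu>) s = Fmu g l u \<mu> s + (0, v, v)"
    unfolding s v_def by (simp add: Fmu_def vec_eq_iff algebra_simps)
  moreover have "norm v \<le> real CARD('n) * \<mu>"
  proof -
    have "norm v \<le> (\<Sum>i\<in>UNIV. \<bar>v $ i\<bar>)" by (rule norm_le_l1_cart)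
    also have "\<dots> = real CARD('n) * (\<mu> - \<sigma> * \<mu>)"
      using assms by (simp add: v_def mult_left_le_one_le)
    also have "\<dots> \<le> real CARD('n) * \<mu>" using assms by (simp add: mult_left_mono)
    finally show ?thesis .
  qed
  moreover have "norm (0::real^'n, v, v) \<le> 2 * norm v"
    using norm_Pair_le[of "0::real^'n" "(v, v)"] norm_Pair_le[of v v] by simp
  ultimately show ?thesis
    using norm_triangle_ineq[of "Fmu g l u \<mu> s" "(0, v, v)"] by simp
qed

lemma newton_step_norm_le:
  fixes s d :: "('n::finite) pdstate"
  assumes inv: "norm d \<le> K * norm (Fprime H l u s d)" and "0 \<le> K"
    and newton: "Fprime H l u s d = - Fmu g l u (\<sigma> * \<mu>) s"
    and res: "norm (Fmu g l u \<mu> s) \<le> C * \<mu>"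
    and "0 \<le> \<sigma>" "\<sigma> \<le> 1" "0 \<le> \<mu>"
  shows "norm d \<le> K * (C + 2 * real CARD('n)) * \<mu>"
proof -
  have "norm (Fprime H l u s d) \<le> (C + 2 * real CARD('n)) * \<mu>"
    using newton res norm_Fmu_le_shift[OF assms(5-7), of g l u s] by (simp add: algebra_simps)
  then show ?thesis using inv \<open>0 \<le> K\<close> by (smt (verit) mult.assoc mult_left_mono)
qed

lemma continuous_matrix_entries_bounded:
  fixes H :: "'a::metric_space \<Rightarrow> real^'n^'m"
  assumes "continuous_on S H" "compact S"
  obtains M where "0 \<le> M" "\<And>y i j. y \<in> S \<Longrightarrow> \<bar>H y $ i $ j\<bar> \<le> M"
proof -
  obtain M where M: "\<And>y. y \<in> S \<Longrightarrow> norm (H y) \<le> M"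
    using compact_imp_bounded[OF compact_continuous_image[OF assms]] by (auto simp: bounded_iff)
  have "\<bar>H y $ i $ j\<bar> \<le> max M 0" if "y \<in> S" for y i j
    using component_le_norm_cart[of "H y $ i" j] Finite_Cartesian_Product.norm_nth_le[where x="H y" and i=i] M[OF that] by linarith
  then show ?thesis using that[of "max M 0"] by simp
qed

lemma uniform_strict_complementarity:
  fixes xs lls lus l u :: "real^'n"
  assumes "\<And>i. 0 < (xs $ i - l $ i) + lls $ i" "\<And>i. 0 < (u $ i - xs $ i) + lus $ i"
  obtains c where "0 < c" "\<And>i. c \<le> (xs $ i - l $ i) + lls $ i" "\<And>i. c \<le> (u $ i - xs $ i) + lus $ i"
proof -
  define c where "c = Min (range (\<lambda>i. min ((xs $ i - l $ i) + lls $ i) ((u $ i - xs $ i) + lus $ i)))"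
  have "0 < c" unfolding c_def using assms by (subst Min_gr_iff) auto
  moreover have "c \<le> min ((xs $ i - l $ i) + lls $ i) ((u $ i - xs $ i) + lus $ i)" for i
    unfolding c_def by (rule Min_le) auto
  ultimately show ?thesis using that by simp
qed

text \<open>The iterate \<open>(x, ll, lu)\<close> near the solution \<open>(xs, lls, lus)\<close>, with the Newton step taken
  towards the barrier parameter \<open>m\<close> (the \<open>\<mu>\<^sup>+\<close> of the paper); \<open>K\<close> and \<open>B\<close> are the constants of
  the \<open>O(\<mu>)\<close> bounds on the complementarity products and on the Newton step.\<close>

locale newton_near_solution =
  fixes g :: "real^'n::finite \<Rightarrow> real^'n" and H :: "real^'n \<Rightarrow> real^'n^'n"
    and l u xs lls lus x ll lu dxN dlN duN :: "real^'n"
    and m \<mu> c K M B :: real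
  assumes interior: "\<And>i. l $ i < x $ i" "\<And>i. x $ i < u $ i"
    and multipliers_pos: "\<And>i. 0 < ll $ i" "\<And>i. 0 < lu $ i"
    and margin_pos: "0 < c"
    and lower_margin: "\<And>i. c \<le> (xs $ i - l $ i) + lls $ i"
    and upper_margin: "\<And>i. c \<le> (u $ i - xs $ i) + lus $ i"
    and lower_compl: "\<And>i. (xs $ i - l $ i) * lls $ i = 0"
    and upper_compl: "\<And>i. (u $ i - xs $ i) * lus $ i = 0"
    and close: "\<And>i. \<bar>x $ i - xs $ i\<bar> < c / 2" "\<And>i. \<bar>ll $ i - lls $ i\<bar> < c / 2"
      "\<And>i. \<bar>lu $ i - lus $ i\<bar> < c / 2"
    and lower_products: "\<And>i. ll $ i * (x $ i - l $ i) \<le> K * \<mu>"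
    and upper_products: "\<And>i. lu $ i * (u $ i - x $ i) \<le> K * \<mu>"
    and hessian_bound: "\<And>i j. \<bar>H x $ i $ j\<bar> \<le> M"
    and newton: "Fprime H l u (x, ll, lu) (dxN, dlN, duN) = - Fmu g l u m (x, ll, lu)"
    and newton_bound: "\<And>i. \<bar>dxN $ i\<bar> \<le> B * \<mu>" "\<And>i. \<bar>dlN $ i\<bar> \<le> B * \<mu>"
      "\<And>i. \<bar>duN $ i\<bar> \<le> B * \<mu>"
    and mu_pos: "0 < \<mu>"
    and mu_small: "\<mu> \<le> c^2 / (8 * K * (M + 1))"
begin

definition error_bound :: real where
  "error_bound = 8 * K * B * (1 + real CARD('n) * M) / c^2 * \<mu>^2"

lemma lower_gap:
  assumes "xs $ i \<noteq> l $ i" shows "c / 2 \<le> x $ i - l $ i"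
proof -
  have "lls $ i = 0" using lower_compl[of i] assms by simp
  then show ?thesis using lower_margin[of i] close(1)[of i] by linarith
qed

lemma upper_gap:
  assumes "xs $ i \<noteq> u $ i" shows "c / 2 \<le> u $ i - x $ i"
proof -
  have "lus $ i = 0" using upper_compl[of i] assms by simp
  then show ?thesis using upper_margin[of i] close(1)[of i] by linarith
qed

lemma lower_multiplier: "xs $ i = l $ i \<Longrightarrow> c / 2 \<le> ll $ i"
  using lower_margin[of i] close(2)[of i] by linarith

lemma upper_multiplier: "xs $ i = u $ i \<Longrightarrow> c / 2 \<le> lu $ i"
  using upper_margin[of i] close(3)[of i] by linarith

lemma K_pos: "0 < K"
proof -
  fix i
  have "0 < ll $ i * (x $ i - l $ i)" using multipliers_pos interior by simp
  then have "0 < K * \<mu>" using lower_products[of i] by linarith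
  then show ?thesis using mu_pos by (simp add: zero_less_mult_iff)
qed

lemma M_nonneg: "0 \<le> M"
  using hessian_bound[of undefined undefined] by linarith

lemma B_nonneg: "0 \<le> B"
  using newton_bound(1)[of undefined] mu_pos by (smt (verit) mult_neg_pos)

lemma complementarity_bound_le_error_bound: "4 * K * B * \<mu>^2 / c^2 \<le> error_bound"
proof -
  have "4 * K * B \<le> 8 * K * B * (1 + real CARD('n) * M)"
    using K_pos B_nonneg M_nonneg by (simp add: algebra_simps)
  then show ?thesis unfolding error_bound_def
    by (simp add: divide_right_mono mult_right_mono)
qed

lemma dlC_error: "xs $ i \<noteq> l $ i \<Longrightarrow> \<bar>dlN $ i - dlC l m (x, ll, lu) i\<bar> \<le> error_bound"
  using complementarity_step_error[of "ll $ i" c "x $ i - l $ i" K \<mu> "dxN $ i" B "dlN $ i" m]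
    multipliers_pos lower_gap margin_pos lower_products newton_bound(1)
    newton_equation_rows(2)[OF newton, of i] complementarity_bound_le_error_bound
  by (simp add: dlC_def algebra_simps)

lemma duC_error: "xs $ i \<noteq> u $ i \<Longrightarrow> \<bar>duN $ i - duC u m (x, ll, lu) i\<bar> \<le> error_bound"
  using complementarity_step_error[of "lu $ i" c "u $ i - x $ i" K \<mu> "- dxN $ i" B "duN $ i" m]
    multipliers_pos upper_gap margin_pos upper_products newton_bound(1)
    newton_equation_rows(3)[OF newton, of i] complementarity_bound_le_error_bound
  by (simp add: duC_def algebra_simps)

lemma dxCl_error: "xs $ i = l $ i \<Longrightarrow> \<bar>dxN $ i - dxCl l m (x, ll, lu) i\<bar> \<le> error_bound"
  using complementarity_step_error[of "x $ i - l $ i" c "ll $ i" K \<mu> "dlN $ i" B "dxN $ i" m]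
    interior lower_multiplier margin_pos lower_products newton_bound(2)
    newton_equation_rows(2)[OF newton, of i] complementarity_bound_le_error_bound
  by (simp add: dxCl_def algebra_simps)

lemma dxCu_error: "xs $ i = u $ i \<Longrightarrow> \<bar>dxN $ i - dxCu u m (x, ll, lu) i\<bar> \<le> error_bound"
  using complementarity_step_error[of "u $ i - x $ i" c "lu $ i" K \<mu> "duN $ i" B "- dxN $ i" m]
    interior upper_multiplier margin_pos upper_products newton_bound(3)
    newton_equation_rows(3)[OF newton, of i] complementarity_bound_le_error_bound
  by (simp add: dxCu_def algebra_simps)

lemma dxS_error:
  assumes "c / 2 \<le> ll $ i \<or> c / 2 \<le> lu $ i"
  shows "\<bar>dxN $ i - dxS g H l u m (x, ll, lu) i\<bar> \<le> error_bound"
proof -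
  let ?d = "H x $ i $ i + ll $ i / (x $ i - l $ i) + lu $ i / (u $ i - x $ i)"
  let ?r = "(H x *v dxN) $ i - H x $ i $ i * dxN $ i"
  have gaps: "0 < x $ i - l $ i" "0 < u $ i - x $ i" using interior[of i] by simp_all
  have diagonal: "c^2 / (8 * K * \<mu>) \<le> ?d"
    using assms
  proof
    assume "c / 2 \<le> ll $ i"
    then show ?thesis
      using barrier_diagonal_lower_bound[of c "ll $ i" "x $ i - l $ i" K \<mu> "lu $ i" "u $ i - x $ i" "H x $ i $ i" M]
        gaps lower_products multipliers_pos hessian_bound margin_pos mu_pos K_pos mu_small
      by (simp add: less_imp_le)
  next
    assume "c / 2 \<le> lu $ i"
    then have "c^2 / (8 * K * \<mu>) \<le> H x $ i $ i + lu $ i / (u $ i - x $ i) + ll $ i / (x $ i - l $ i)"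
      using barrier_diagonal_lower_bound[of c "lu $ i" "u $ i - x $ i" K \<mu> "ll $ i" "x $ i - l $ i" "H x $ i $ i" M]
        gaps upper_products multipliers_pos hessian_bound margin_pos mu_pos K_pos mu_small
      by (simp add: less_imp_le)
    then show ?thesis by (simp add: add_ac)
  qed
  have offdiagonal: "\<bar>?r\<bar> \<le> real CARD('n) * M * (B * \<mu>)"
    using offdiagonal_matrix_vector_bound[of "H x" i M dxN "B * \<mu>"] hessian_bound newton_bound(1)
    by simp
  have "0 < c^2 / (8 * K * \<mu>)" using margin_pos K_pos mu_pos by simp
  moreover have "H x $ i $ i * dxN $ i + ?r - dlN $ i + duN $ i = - (g x $ i - ll $ i + lu $ i)"
    using newton_equation_rows(1)[OF newton, of i] by simp
  ultimately have "\<bar>dxN $ i - (- (1 / ?d) * (g x $ i - m * (1 / (x $ i - l $ i) - 1 / (u $ i - x $ i))))\<bar>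
      \<le> real CARD('n) * M * (B * \<mu>) / (c^2 / (8 * K * \<mu>))"
    using diagonal_step_error[OF gaps refl _ diagonal offdiagonal _ newton_equation_rows(2,3)[OF newton]]
    by blast
  then have "\<bar>dxN $ i - dxS g H l u m (x, ll, lu) i\<bar>
      \<le> real CARD('n) * M * (B * \<mu>) / (c^2 / (8 * K * \<mu>))"
    by (simp add: dxS_def Let_def)
  also have "\<dots> = 8 * K * B * (real CARD('n) * M) / c^2 * \<mu>^2"
    using margin_pos K_pos mu_pos by (simp add: field_simps power2_eq_square)
  also have "\<dots> \<le> error_bound"
    unfolding error_bound_def using K_pos B_nonneg margin_pos
    by (intro mult_right_mono divide_right_mono mult_left_mono) auto
  finally show ?thesis .
qed

lemma approximate_step_not_longer:
  assumes dx_lower: "\<And>i. xs $ i = l $ i \<Longrightarrow> dx $ i \<in> {dxS g H l u m (x, ll, lu) i, dxCl l m (x, ll, lu) i}"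
    and dx_upper: "\<And>i. xs $ i = u $ i \<Longrightarrow> dx $ i \<in> {dxS g H l u m (x, ll, lu) i, dxCu u m (x, ll, lu) i}"
    and dx_inactive: "\<And>i. xs $ i \<noteq> l $ i \<and> xs $ i \<noteq> u $ i \<Longrightarrow> dx $ i = 0"
    and dl: "\<And>i. dl $ i = (if xs $ i \<noteq> l $ i then dlC l m (x, ll, lu) i else 0)"
    and du: "\<And>i. du $ i = (if xs $ i \<noteq> u $ i then duC u m (x, ll, lu) i else 0)"
    and small: "3 * real CARD('n) * error_bound\<^sup>2 \<le> t\<^sup>2" "0 \<le> t"
    and large: "t \<le> sqrt ((\<Sum>i\<in>{i. xs $ i = l $ i \<or> xs $ i = u $ i}. (dxN $ i)\<^sup>2)
      + (\<Sum>i\<in>{i. xs $ i \<noteq> l $ i}. (dlN $ i)\<^sup>2) + (\<Sum>i\<in>{i. xs $ i \<noteq> u $ i}. (duN $ i)\<^sup>2))"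
  shows "norm (dxN - dx, dlN - dl, duN - du) \<le> norm (dxN, dlN, duN)"
proof (rule norm_diff_le_norm_if_close_on_supports[OF _ _ _ _ _ _ small large])
  fix i
  show "i \<notin> {i. xs $ i = l $ i \<or> xs $ i = u $ i} \<Longrightarrow> dx $ i = 0" using dx_inactive by simp
  show "i \<notin> {i. xs $ i \<noteq> l $ i} \<Longrightarrow> dl $ i = 0" using dl by simp
  show "i \<notin> {i. xs $ i \<noteq> u $ i} \<Longrightarrow> du $ i = 0" using du by simp
  show "i \<in> {i. xs $ i \<noteq> l $ i} \<Longrightarrow> \<bar>dlN $ i - dl $ i\<bar> \<le> error_bound" using dl dlC_error by simp
  show "i \<in> {i. xs $ i \<noteq> u $ i} \<Longrightarrow> \<bar>duN $ i - du $ i\<bar> \<le> error_bound" using du duC_error by simp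
  assume "i \<in> {i. xs $ i = l $ i \<or> xs $ i = u $ i}"
  then consider (lower) "xs $ i = l $ i" | (upper) "xs $ i = u $ i" by blast
  then show "\<bar>dxN $ i - dx $ i\<bar> \<le> error_bound"
  proof cases
    case lower
    then show ?thesis
      using dx_lower[OF lower] dxS_error[of i] lower_multiplier[OF lower] dxCl_error[OF lower] by auto
  next
    case upper
    then show ?thesis
      using dx_upper[OF upper] dxS_error[of i] upper_multiplier[OF upper] dxCu_error[OF upper] by auto
  qed
qed

end

lemma approximate_step_near_central_path:
  fixes g :: "real^'n \<Rightarrow> real^'n" and H :: "real^'n \<Rightarrow> real^'n^'n"
    and l u xs lls lus x ll lu dxN dlN duN dx dl du :: "real^'n" and traj :: "real \<Rightarrow> 'n pdstate"
    and K C1 M c \<delta> C4 \<sigma> C8 \<gamma> \<mu> :: real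
  defines "E \<equiv> 8 * (1 + C1) * (K * (C1 + 2 * real CARD('n))) * (1 + real CARD('n) * M) / c^2"
  assumes compl: "\<forall>i. (xs $ i - l $ i) * lls $ i = 0 \<and> (u $ i - xs $ i) * lus $ i = 0"
    and margin: "0 < c" "\<And>i. c \<le> (xs $ i - l $ i) + lls $ i" "\<And>i. c \<le> (u $ i - xs $ i) + lus $ i"
    and inverse: "0 \<le> K" "\<And>s d. dist s (xs, lls, lus) \<le> \<delta> \<Longrightarrow> norm d \<le> K * norm (Fprime H l u s d)"
    and hessian: "\<And>y i j. y \<in> cball xs \<delta> \<Longrightarrow> \<bar>H y $ i $ j\<bar> \<le> M"
    and central_path: "dist (traj \<mu>) (xs, lls, lus) \<le> C4 * \<mu>" "C4 * \<mu> \<le> c / 4"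
    and \<sigma>: "0 < \<sigma>" "\<sigma> < 1" and "0 < C8"
    and \<mu>: "0 < \<mu>" "\<mu> \<le> c^2 / (8 * (1 + C1) * (M + 1))"
      "3 * real CARD('n) * E^2 * \<mu>^4 \<le> (C8 * \<mu> powr \<gamma>)^2"
    and point: "dist (x, ll, lu) (xs, lls, lus) \<le> \<delta>" "\<forall>i. l $ i < x $ i \<and> x $ i < u $ i"
      "\<forall>i. ll $ i > 0 \<and> lu $ i > 0" "dist (x, ll, lu) (traj \<mu>) < c / 4"
      "norm (Fmu g l u \<mu> (x, ll, lu)) \<le> C1 * \<mu>"
    and newton: "Fprime H l u (x, ll, lu) (dxN, dlN, duN) = - Fmu g l u (\<sigma> * \<mu>) (x, ll, lu)"
    and newton_large: "sqrt ((\<Sum>i\<in>{i. xs $ i = l $ i \<or> xs $ i = u $ i}. (dxN $ i)\<^sup>2)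
      + (\<Sum>i\<in>{i. xs $ i \<noteq> l $ i}. (dlN $ i)\<^sup>2) + (\<Sum>i\<in>{i. xs $ i \<noteq> u $ i}. (duN $ i)\<^sup>2))
      \<ge> C8 * \<mu> powr \<gamma>"
    and choice: "\<forall>i. xs $ i = l $ i \<longrightarrow> dx $ i \<in> {dxS g H l u (\<sigma> * \<mu>) (x, ll, lu) i, dxCl l (\<sigma> * \<mu>) (x, ll, lu) i}"
      "\<forall>i. xs $ i = u $ i \<longrightarrow> dx $ i \<in> {dxS g H l u (\<sigma> * \<mu>) (x, ll, lu) i, dxCu u (\<sigma> * \<mu>) (x, ll, lu) i}"
      "\<forall>i. xs $ i \<noteq> l $ i \<and> xs $ i \<noteq> u $ i \<longrightarrow> dx $ i = 0"
      "\<forall>i. dl $ i = (if xs $ i \<noteq> l $ i then dlC l (\<sigma> * \<mu>) (x, ll, lu) i else 0)"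
      "\<forall>i. du $ i = (if xs $ i \<noteq> u $ i then duC u (\<sigma> * \<mu>) (x, ll, lu) i else 0)"
  shows "norm (dxN - dx, dlN - dl, duN - du) \<le> norm (dxN, dlN, duN)"
proof -
  define B where "B = K * (C1 + 2 * real CARD('n))"
  have "norm (x - xs, ll - lls, lu - lus) < c / 2"
    using dist_triangle[of "(x, ll, lu)" "(xs, lls, lus)" "traj \<mu>"] point(4) central_path
    by (simp add: dist_norm)
  then have close: "\<bar>x $ i - xs $ i\<bar> < c / 2" "\<bar>ll $ i - lls $ i\<bar> < c / 2" "\<bar>lu $ i - lus $ i\<bar> < c / 2" for i
    using abs_nth_le_norm_pdstate[where a = "x - xs" and b = "ll - lls" and c = "lu - lus" and i = i] by auto
  have "x \<in> cball xs \<delta>"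
    using dist_fst_le[of "(x, ll, lu)" "(xs, lls, lus)"] point(1) by (simp add: dist_commute)
  have "norm (dxN, dlN, duN) \<le> B * \<mu>"
    using newton_step_norm_le[OF inverse(2)[OF point(1)] inverse(1) newton point(5)] \<sigma> \<mu>(1)
    unfolding B_def by simp
  then have newton_bound: "\<bar>dxN $ i\<bar> \<le> B * \<mu>" "\<bar>dlN $ i\<bar> \<le> B * \<mu>" "\<bar>duN $ i\<bar> \<le> B * \<mu>" for i
    using abs_nth_le_norm_pdstate[where a = dxN and b = dlN and c = duN and i = i] by auto
  interpret newton_near_solution g H l u xs lls lus x ll lu dxN dlN duN "\<sigma> * \<mu>" \<mu> c "1 + C1" M B
    using point(2,3) margin compl close complementarity_le_of_norm_Fmu[OF point(5)]
      hessian[OF \<open>x \<in> cball xs \<delta>\<close>] newton newton_bound \<mu>(1,2)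
    by unfold_locales auto
  have "error_bound = E * \<mu>^2" unfolding error_bound_def by (simp add: E_def B_def)
  show ?thesis
    using choice \<mu>(3) \<open>0 < C8\<close> newton_large
    by (intro approximate_step_not_longer[where t = "C8 * \<mu> powr \<gamma>"])
      (simp_all add: \<open>error_bound = E * \<mu>^2\<close> power_mult_distrib)
qed

lemma small_barrier_parameters:
  fixes \<mu>hat c M C1 C4 C8 A \<gamma> :: real
  assumes "0 < \<mu>hat" "0 < c" "0 \<le> M" "0 \<le> C1" "0 < C8" "0 \<le> A" "\<gamma> < 2"
  obtains \<mu>bar where "0 < \<mu>bar" "\<mu>bar \<le> \<mu>hat"
    "\<And>\<mu>. 0 < \<mu> \<Longrightarrow> \<mu> \<le> \<mu>bar \<Longrightarrow> C4 * \<mu> \<le> c / 4"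
    "\<And>\<mu>. 0 < \<mu> \<Longrightarrow> \<mu> \<le> \<mu>bar \<Longrightarrow> \<mu> \<le> c^2 / (8 * (1 + C1) * (M + 1))"
    "\<And>\<mu>. 0 < \<mu> \<Longrightarrow> \<mu> \<le> \<mu>bar \<Longrightarrow> A * \<mu>^4 \<le> (C8 * \<mu> powr \<gamma>)^2"
proof
  define \<mu>bar where "\<mu>bar = Min {\<mu>hat, c / (4 * (\<bar>C4\<bar> + 1)), c^2 / (8 * (1 + C1) * (M + 1)),
      (C8^2 / (A + 1)) powr (1 / (4 - 2 * \<gamma>))}"
  show "0 < \<mu>bar" "\<mu>bar \<le> \<mu>hat"
    unfolding \<mu>bar_def using assms by (auto intro!: add_nonneg_pos)
  fix \<mu> assume "0 < \<mu>" "\<mu> \<le> \<mu>bar"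
  have "C4 * \<mu> \<le> (\<bar>C4\<bar> + 1) * (c / (4 * (\<bar>C4\<bar> + 1)))"
    using \<open>0 < \<mu>\<close> \<open>\<mu> \<le> \<mu>bar\<close> unfolding \<mu>bar_def by (intro mult_mono) auto
  also have "\<dots> = c / 4" by (simp add: field_simps)
  finally show "C4 * \<mu> \<le> c / 4" .
  show "\<mu> \<le> c^2 / (8 * (1 + C1) * (M + 1))" using \<open>\<mu> \<le> \<mu>bar\<close> unfolding \<mu>bar_def by simp
  show "A * \<mu>^4 \<le> (C8 * \<mu> powr \<gamma>)^2"
    using power4_le_square_powr[of \<mu> \<gamma> A C8] \<open>0 < \<mu>\<close> \<open>\<mu> \<le> \<mu>bar\<close> assms
    unfolding \<mu>bar_def by simp
qed

theorem mainTheorem10: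
  fixes f :: "real^'n \<Rightarrow> real"
    and g :: "real^'n \<Rightarrow> real^'n"
    and H :: "real^'n \<Rightarrow> real^'n^'n"
    and l u xs lls lus :: "real^'n"
    and traj :: "real \<Rightarrow> 'n pdstate"
    and \<delta> \<mu>hat C4 \<sigma> C1 \<gamma> C8 :: real
  assumes lu: "\<forall>i. l$i < u$i"
    and grad: "\<forall>x. (f has_derivative (\<lambda>h. g x \<bullet> h)) (at x)"
    and hess: "\<forall>x. (g has_derivative (\<lambda>h. H x *v h)) (at x)"
    and hess_cont: "continuous_on UNIV H"
    and hess_loclip: "\<forall>x. \<exists>e>0. \<exists>L. L-lipschitz_on (cball x e) H"
    and kkt_stat: "g xs - lls + lus = 0"
    and feas: "\<forall>i. l$i \<le> xs$i \<and> xs$i \<le> u$i"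
    and dual_nonneg: "\<forall>i. lls$i \<ge> 0 \<and> lus$i \<ge> 0"
    and compl: "\<forall>i. (xs$i - l$i) * lls$i = 0 \<and> (u$i - xs$i) * lus$i = 0"
    and strict: "\<forall>i. (xs$i - l$i) + lls$i > 0 \<and> (u$i - xs$i) + lus$i > 0"
    and pd: "\<forall>v::real^'n. v \<noteq> 0 \<and> (\<forall>i. xs$i = l$i \<or> xs$i = u$i \<longrightarrow> v$i = 0)
               \<longrightarrow> v \<bullet> (H xs *v v) > 0"
    and \<delta>pos: "\<delta> > 0"
    and nonsing: "\<forall>s. dist s (xs, lls, lus) \<le> \<delta> \<longrightarrow> bij (Fprime H l u s)"
    and bdd_inv: "\<exists>K. \<forall>s d. dist s (xs, lls, lus) \<le> \<delta> \<longrightarrow> norm d \<le> K * norm (Fprime H l u s d)"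
    and \<mu>hat_pos: "\<mu>hat > 0"
    and traj_lip: "\<exists>L. L-lipschitz_on {0<..\<mu>hat} traj"
    and traj_ball: "\<forall>\<mu>\<in>{0<..\<mu>hat}. dist (traj \<mu>) (xs, lls, lus) \<le> \<delta>"
    and traj_zero: "\<forall>\<mu>\<in>{0<..\<mu>hat}. Fmu g l u \<mu> (traj \<mu>) = 0"
    and traj_conv: "\<forall>\<mu>\<in>{0<..\<mu>hat}. dist (traj \<mu>) (xs, lls, lus) \<le> C4 * \<mu>"
    and \<sigma>: "0 < \<sigma>" "\<sigma> < 1"
    and C1: "C1 > 0"
    and \<gamma>: "0 \<le> \<gamma>" "\<gamma> < 2"
    and C8: "C8 > 0"
  shows "\<exists>\<rho>>0. \<exists>\<mu>bar. 0 < \<mu>bar \<and> \<mu>bar \<le> \<mu>hat \<and>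
    (\<forall>\<mu>. 0 < \<mu> \<and> \<mu> \<le> \<mu>bar \<longrightarrow>
      (\<forall>x ll lu. dist (x, ll, lu) (xs, lls, lus) \<le> \<delta>
         \<and> (\<forall>i. l$i < x$i \<and> x$i < u$i) \<and> (\<forall>i. ll$i > 0 \<and> lu$i > 0)
         \<and> dist (x, ll, lu) (traj \<mu>) < \<rho>
         \<and> norm (Fmu g l u \<mu> (x, ll, lu)) \<le> C1 * \<mu> \<longrightarrow>
       (\<forall>dxN dlN duN.
          Fprime H l u (x, ll, lu) (dxN, dlN, duN) = - Fmu g l u (\<sigma> * \<mu>) (x, ll, lu)
          \<and> sqrt ((\<Sum>i\<in>{i. xs$i = l$i \<or> xs$i = u$i}. (dxN$i)\<^sup>2)
                 + (\<Sum>i\<in>{i. xs$i \<noteq> l$i}. (dlN$i)\<^sup>2)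
                 + (\<Sum>i\<in>{i. xs$i \<noteq> u$i}. (duN$i)\<^sup>2)) \<ge> C8 * \<mu> powr \<gamma> \<longrightarrow>
        (\<forall>dx dl du.
           (\<forall>i. xs$i = l$i \<longrightarrow> dx$i \<in> {dxS g H l u (\<sigma> * \<mu>) (x, ll, lu) i, dxCl l (\<sigma> * \<mu>) (x, ll, lu) i})
           \<and> (\<forall>i. xs$i = u$i \<longrightarrow> dx$i \<in> {dxS g H l u (\<sigma> * \<mu>) (x, ll, lu) i, dxCu u (\<sigma> * \<mu>) (x, ll, lu) i})
           \<and> (\<forall>i. xs$i \<noteq> l$i \<and> xs$i \<noteq> u$i \<longrightarrow> dx$i = 0)
           \<and> (\<forall>i. dl$i = (if xs$i \<noteq> l$i then dlC l (\<sigma> * \<mu>) (x, ll, lu) i else 0))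
           \<and> (\<forall>i. du$i = (if xs$i \<noteq> u$i then duC u (\<sigma> * \<mu>) (x, ll, lu) i else 0))
           \<longrightarrow> norm (((x, ll, lu) + (dxN, dlN, duN)) - ((x, ll, lu) + (dx, dl, du)))
               \<le> norm (((x, ll, lu) + (dxN, dlN, duN)) - (x, ll, lu))))))"
proof -
  obtain K where "0 \<le> K" and K: "\<And>s d. dist s (xs, lls, lus) \<le> \<delta> \<Longrightarrow> norm d \<le> K * norm (Fprime H l u s d)"
  proof -
    obtain K0 where "\<forall>s d. dist s (xs, lls, lus) \<le> \<delta> \<longrightarrow> norm d \<le> K0 * norm (Fprime H l u s d)"
      using bdd_inv by blast
    then show ?thesis
      using that[of "max K0 0"] by (meson max.cobounded1 max.cobounded2 mult_right_mono norm_ge_zero order_trans)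
  qed
  obtain M where "0 \<le> M" and M: "\<And>y i j. y \<in> cball xs \<delta> \<Longrightarrow> \<bar>H y $ i $ j\<bar> \<le> M"
    using continuous_matrix_entries_bounded[OF continuous_on_subset[OF hess_cont] compact_cball] by blast
  obtain c where c: "0 < c" "\<And>i. c \<le> (xs $ i - l $ i) + lls $ i" "\<And>i. c \<le> (u $ i - xs $ i) + lus $ i"
    using uniform_strict_complementarity strict by blast
  define E where "E = 8 * (1 + C1) * (K * (C1 + 2 * real CARD('n))) * (1 + real CARD('n) * M) / c^2"
  obtain \<mu>bar where \<mu>bar: "0 < \<mu>bar" "\<mu>bar \<le> \<mu>hat"
    and small: "\<And>\<mu>. 0 < \<mu> \<Longrightarrow> \<mu> \<le> \<mu>bar \<Longrightarrow> C4 * \<mu> \<le> c / 4"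
      "\<And>\<mu>. 0 < \<mu> \<Longrightarrow> \<mu> \<le> \<mu>bar \<Longrightarrow> \<mu> \<le> c^2 / (8 * (1 + C1) * (M + 1))"
      "\<And>\<mu>. 0 < \<mu> \<Longrightarrow> \<mu> \<le> \<mu>bar \<Longrightarrow> 3 * real CARD('n) * E^2 * \<mu>^4 \<le> (C8 * \<mu> powr \<gamma>)^2"
    using small_barrier_parameters[of \<mu>hat c M C1 C8 "3 * real CARD('n) * E^2" \<gamma> C4]
      \<mu>hat_pos c \<open>0 \<le> M\<close> C1 C8 \<gamma> by auto
  show ?thesis
  proof (rule exI[of _ "c / 4"], intro conjI exI[of _ \<mu>bar] allI impI, goal_cases)
    case (4 \<mu> x ll lu dxN dlN duN dx dl du)
    then have \<mu>: "0 < \<mu>" "\<mu> \<le> \<mu>bar" by simp_all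
    then have "dist (traj \<mu>) (xs, lls, lus) \<le> C4 * \<mu>" using traj_conv \<mu>bar by simp
    then have "norm (dxN - dx, dlN - dl, duN - du) \<le> norm (dxN, dlN, duN)"
      using 4 by (intro approximate_step_near_central_path[OF compl c \<open>0 \<le> K\<close> K M _ small(1)[OF \<mu>]
          \<sigma> C8 \<mu>(1) small(2,3)[OF \<mu>, unfolded E_def]]) auto
    then show ?case by simp
  qed (use c \<mu>bar in auto)
qed

end
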